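(* Let $n\ge k\ge 2$ and $r\ge 0$ be integers. Then \[ \mathsf{opt}_{\operatorname{bandit}}^{\operatorname{det}}(n,k,r)\le \frac{e}{e-1}\,k\left(\ln(n/k)+r\right)+k-1. \]
   Context: Prediction with expert advice: $\mathcal{Y}=\{1,\dots,k\}$, $\mathcal{X}=[k]^n$, experts $h_i(x)=x_i$, $i=1,\dots,n$. $\mathcal{P}_r$ is the set of finite sequences of examples in $\mathcal{X}\times\mathcal{Y}$ on which some $h_i$ errs on at most $r$ examples. Bandit feedback: each round the adversary presents $x_t$, a deterministic learner predicts $\hat y_t$ as a function of past observations and $x_t$, and learns only whether $\hat y_t$ equals the true label $y_t$. $\mathsf{opt}_{\operatorname{bandit}}^{\operatorname{det}}(n,k,r)$ is the infimum over deterministic learners of the supremum over $S\in\mathcal{P}_r$ of the number of mistakes ($\hat y_t\ne y_t$). *)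

theory Defs
  imports Complex_Main "HOL-Library.Extended_Real"
begin

text \<open>Instances are x in [k]^n, represented as lists of length n with entries in {1..k};
  labels are in {1..k}; expert i (for i < n) predicts x ! i.\<close>

definition instances :: "nat \<Rightarrow> nat \<Rightarrow> nat list set" where
  "instances n k = {x. length x = n \<and> set x \<subseteq> {1..k}}"

definition expert_errors :: "nat \<Rightarrow> (nat list \<times> nat) list \<Rightarrow> nat" where
  "expert_errors i S = length (filter (\<lambda>(x, y). x ! i \<noteq> y) S)"

definition P_r :: "nat \<Rightarrow> nat \<Rightarrow> nat \<Rightarrow> (nat list \<times> nat) list set" where
  "P_r n k r = {S. (\<forall>(x, y) \<in> set S. x \<in> instances n k \<and> y \<in> {1..k})
                  \<and> (\<exists>i<n. expert_errors i S \<le> r)}"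

text \<open>A deterministic bandit learner: maps the history of past observations
  (instance, own prediction, feedback bit "prediction was correct") and the current
  instance to a prediction.\<close>
type_synonym bandit_learner = "(nat list \<times> nat \<times> bool) list \<Rightarrow> nat list \<Rightarrow> nat"

fun bandit_mistakes_from ::
  "bandit_learner \<Rightarrow> (nat list \<times> nat \<times> bool) list \<Rightarrow> (nat list \<times> nat) list \<Rightarrow> nat" where
  "bandit_mistakes_from L h [] = 0"
| "bandit_mistakes_from L h ((x, y) # S) =
     (let p = L h x in
        (if p \<noteq> y then 1 else 0) + bandit_mistakes_from L (h @ [(x, p, p = y)]) S)"

definition bandit_mistakes :: "bandit_learner \<Rightarrow> (nat list \<times> nat) list \<Rightarrow> nat" where
  "bandit_mistakes L S = bandit_mistakes_from L [] S"

definition opt_bandit_det :: "nat \<Rightarrow> nat \<Rightarrow> nat \<Rightarrow> ereal" where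
  "opt_bandit_det n k r =
     (INF L :: bandit_learner. SUP S \<in> P_r n k r. ereal (real (bandit_mistakes L S)))"

end

theory Submission
  imports Defs
begin

text \<open>The learner keeps weight \<open>exp (r - c)\<close> on every expert refuted \<open>c \<le> r\<close> times so
  far (bandit feedback refutes the experts that disagree with a correct prediction or agree with
  a wrong one) and predicts the label with the largest total vote. On a mistake the voters for
  the prediction carry at least \<open>1/k\<close> of the total weight \<open>W\<close> and are all refuted, so \<open>W\<close>
  shrinks by the factor \<open>1 - (1 - 1/e)/k\<close>, and while \<open>W \<ge> k\<close> the quantity
  \<open>e/(e-1) k ln (W/k)\<close> drops by at least 1. Once \<open>W < k\<close>, the remaining lives \<open>r - c + 1\<close>,
  summed over the surviving experts, number fewer than \<open>k\<close> because each life carries weight at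
  least 1, and every mistake costs some surviving expert a life. The potential combining both
  regimes stays nonnegative while the best expert survives and initially equals the bound.\<close>

type_synonym history = "(nat list \<times> nat \<times> bool) list"

lemma arg_max_on_finite:
  fixes f :: "'a \<Rightarrow> 'b::linorder"
  assumes "finite S" "S \<noteq> {}"
  shows "arg_max_on f S \<in> S \<and> (\<forall>y\<in>S. f y \<le> f (arg_max_on f S))"
proof -
  have "Max (f ` S) \<in> f ` S" using assms by simp
  then obtain x where max: "Max (f ` S) = f x" and "x \<in> S" by (rule imageE)
  then have "is_arg_max f (\<lambda>z. z \<in> S) x"
    using assms(1) by (auto simp: is_arg_max_linorder simp flip: max)
  then have "is_arg_max f (\<lambda>z. z \<in> S) (arg_max_on f S)"
    unfolding arg_max_on_def arg_max_def by (rule someI)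
  then show ?thesis by (simp add: is_arg_max_linorder)
qed

lemma bandit_mistakes_from_le_potential:
  fixes L :: bandit_learner and \<Phi> :: "history \<Rightarrow> real"
  assumes "Inv h S"
    and nonneg: "\<And>h. Inv h [] \<Longrightarrow> 0 \<le> \<Phi> h"
    and invariant: "\<And>h x y S. Inv h ((x, y) # S) \<Longrightarrow> Inv (h @ [(x, L h x, L h x = y)]) S"
    and decrease: "\<And>h x y S. Inv h ((x, y) # S) \<Longrightarrow>
        (if L h x \<noteq> y then 1 else 0) + \<Phi> (h @ [(x, L h x, L h x = y)]) \<le> \<Phi> h"
  shows "real (bandit_mistakes_from L h S) \<le> \<Phi> h"
  using assms(1)
proof (induction S arbitrary: h)
  case Nil
  then show ?case using nonneg by simp
next
  case (Cons xy S)
  obtain x y where xy: "xy = (x, y)" by (cases xy)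
  let ?h' = "h @ [(x, L h x, L h x = y)]"
  have "real (bandit_mistakes_from L ?h' S) \<le> \<Phi> ?h'"
    using invariant[OF Cons.prems[unfolded xy]] by (rule Cons.IH)
  moreover have "real (bandit_mistakes_from L h (xy # S))
      = (if L h x \<noteq> y then 1 else 0) + real (bandit_mistakes_from L ?h' S)"
    by (simp add: xy Let_def)
  ultimately show ?case using decrease[OF Cons.prems[unfolded xy]] unfolding xy by linarith
qed

definition mistake_decay :: "nat \<Rightarrow> real" where
  "mistake_decay k = 1 - (1 - 1 / exp 1) / real k"

definition log_potential :: "nat \<Rightarrow> real \<Rightarrow> real" where
  "log_potential k W = exp 1 / (exp 1 - 1) * real k * ln (W / real k)"

definition mistake_potential :: "nat \<Rightarrow> real \<Rightarrow> nat \<Rightarrow> real" where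
  "mistake_potential k W B = (if real k \<le> W then log_potential k W + real k - 1 else real B - 1)"

lemma mistake_decay_bounds:
  assumes "1 \<le> k"
  shows "0 < mistake_decay k" "mistake_decay k \<le> 1"
proof -
  have "0 < 1 - 1 / exp (1::real)" by simp
  moreover have "1 \<le> real k" using assms by simp
  ultimately have "(1 - 1 / exp 1) / real k \<le> 1 - 1 / exp 1" and "0 \<le> (1 - 1 / exp 1) / real k"
    by (simp_all add: divide_le_eq)
  moreover have "0 < 1 / exp (1::real)" by simp
  ultimately show "0 < mistake_decay k" "mistake_decay k \<le> 1"
    unfolding mistake_decay_def by linarith+
qed

lemma le_mult_mistake_decayD:
  assumes "1 \<le> k" "0 < W'" "W' \<le> W * mistake_decay k"
  shows "0 < W" "W' \<le> W"
proof -
  have "0 < mistake_decay k" "mistake_decay k \<le> 1" using mistake_decay_bounds assms(1) by blast+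
  moreover have "0 < W * mistake_decay k" using assms(2,3) by linarith
  ultimately show "0 < W" by (simp add: zero_less_mult_iff)
  then have "W * mistake_decay k \<le> W" using \<open>mistake_decay k \<le> 1\<close> by (simp add: mult_left_le)
  then show "W' \<le> W" using assms(3) by linarith
qed

lemma log_potential_nonneg:
  assumes "1 \<le> k" "real k \<le> W"
  shows "0 \<le> log_potential k W"
  using assms unfolding log_potential_def
  by (intro mult_nonneg_nonneg ln_ge_zero) (auto simp: less_imp_le)

lemma log_potential_mono:
  assumes "1 \<le> k" "0 < W'" "W' \<le> W"
  shows "log_potential k W' \<le> log_potential k W"
  using assms unfolding log_potential_def by (simp add: divide_right_mono)

lemma log_potential_decrease:
  assumes "1 \<le> k" "0 < W'" "W' \<le> W * mistake_decay k"
  shows "log_potential k W' + 1 \<le> log_potential k W"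
proof -
  let ?q = "mistake_decay k"
  have "0 < ?q" using mistake_decay_bounds assms(1) by blast
  have "0 < W" using le_mult_mistake_decayD[OF assms] by blast
  have "ln W' \<le> ln (W * ?q)" using assms(2,3) by simp
  also have "\<dots> = ln W + ln ?q" using \<open>0 < W\<close> \<open>0 < ?q\<close> by (rule ln_mult_pos)
  also have "\<dots> \<le> ln W + (?q - 1)" using \<open>0 < ?q\<close> ln_le_minus_one by simp
  finally have "real k * ln W' + (1 - 1 / exp 1) \<le> real k * ln W"
    using assms(1) unfolding mistake_decay_def by (simp add: field_simps)
  then have "real k * ln (W' / real k) + (1 - 1 / exp 1) \<le> real k * ln (W / real k)"
    using assms \<open>0 < W\<close> by (simp add: ln_div right_diff_distrib)
  then have "exp 1 / (exp 1 - 1) * (real k * ln (W' / real k) + (1 - 1 / exp 1))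
      \<le> exp 1 / (exp 1 - 1) * (real k * ln (W / real k))"
    by (rule mult_left_mono) (simp add: less_imp_le)
  moreover have "exp 1 / (exp 1 - 1) * (1 - 1 / exp 1) = (1::real)"
    by (simp add: field_simps)
  ultimately show ?thesis
    unfolding log_potential_def by (simp only: distrib_left mult.assoc)
qed

lemma of_nat_below_le_pred:
  assumes "real B \<le> W" "\<not> real k \<le> W"
  shows "real B \<le> real k - 1"
proof -
  have "B < k" using assms by simp
  then show ?thesis by linarith
qed

lemma mistake_potential_nonneg:
  assumes "1 \<le> k" "1 \<le> B"
  shows "0 \<le> mistake_potential k W B"
  using assms log_potential_nonneg[of k W] by (auto simp: mistake_potential_def)

lemma mistake_potential_mono:
  assumes "1 \<le> k" "real B' \<le> W'" "W' \<le> W" "B' \<le> B"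
  shows "mistake_potential k W' B' \<le> mistake_potential k W B"
proof (cases "real k \<le> W'")
  case True
  then show ?thesis
    using assms log_potential_mono[of k W' W] by (auto simp: mistake_potential_def)
next
  case False
  then have "real B' \<le> real k - 1" using assms(2) by (rule of_nat_below_le_pred[rotated])
  then show ?thesis
    using False assms log_potential_nonneg[of k W] by (auto simp: mistake_potential_def)
qed

lemma mistake_potential_decrease:
  assumes "1 \<le> k" "real B' \<le> W'" "W' \<le> W * mistake_decay k" "B' < B"
  shows "mistake_potential k W' B' + 1 \<le> mistake_potential k W B"
proof (cases "real k \<le> W'")
  case True
  then have "0 < W'" using assms(1) by linarith
  then have "W' \<le> W" using le_mult_mistake_decayD[OF assms(1) _ assms(3)] by blast
  then show ?thesis
    using True assms log_potential_decrease[of k W' W] by (auto simp: mistake_potential_def)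
next
  case False
  then have "real B' \<le> real k - 1" using assms(2) by (rule of_nat_below_le_pred[rotated])
  then show ?thesis
    using False assms log_potential_nonneg[of k W] by (auto simp: mistake_potential_def)
qed

fun refutes :: "nat list \<times> nat \<times> bool \<Rightarrow> nat \<Rightarrow> bool" where
  "refutes (x, p, correct) i \<longleftrightarrow> (x ! i = p) \<noteq> correct"

definition refutations :: "history \<Rightarrow> nat \<Rightarrow> nat" where
  "refutations h i = length (filter (\<lambda>obs. refutes obs i) h)"

definition weight :: "nat \<Rightarrow> history \<Rightarrow> nat \<Rightarrow> real" where
  "weight r h i = (if refutations h i \<le> r then exp (real r - real (refutations h i)) else 0)"

definition total_weight :: "nat \<Rightarrow> nat \<Rightarrow> history \<Rightarrow> real" where
  "total_weight n r h = (\<Sum>i<n. weight r h i)"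

definition vote_weight :: "nat \<Rightarrow> nat \<Rightarrow> history \<Rightarrow> nat list \<Rightarrow> nat \<Rightarrow> real" where
  "vote_weight n r h x l = (\<Sum>i<n. if x ! i = l then weight r h i else 0)"

definition lives :: "nat \<Rightarrow> nat \<Rightarrow> history \<Rightarrow> nat" where
  "lives n r h = (\<Sum>i<n. if refutations h i \<le> r then r - refutations h i + 1 else 0)"

definition weighted_majority :: "nat \<Rightarrow> nat \<Rightarrow> nat \<Rightarrow> bandit_learner" where
  "weighted_majority n k r h x = arg_max_on (vote_weight n r h x) {1..k}"

definition potential :: "nat \<Rightarrow> nat \<Rightarrow> nat \<Rightarrow> history \<Rightarrow> real" where
  "potential n k r h = mistake_potential k (total_weight n r h) (lives n r h)"

lemma instances_nth: "x \<in> instances n k \<Longrightarrow> i < n \<Longrightarrow> x ! i \<in> {1..k}"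
  unfolding instances_def by (auto dest: nth_mem)

lemma refutations_Nil [simp]: "refutations [] i = 0"
  by (simp add: refutations_def)

lemma refutations_snoc:
  "refutations (h @ [obs]) i = refutations h i + (if refutes obs i then 1 else 0)"
  by (simp add: refutations_def)

lemma refutes_imp_expert_wrong: "refutes (x, p, p = y) i \<Longrightarrow> x ! i \<noteq> y"
  by auto

lemma weight_nonneg: "0 \<le> weight r h i"
  by (simp add: weight_def)

lemma one_le_weight: "refutations h i \<le> r \<Longrightarrow> 1 \<le> weight r h i"
  by (simp add: weight_def)

lemma weight_snoc_le: "weight r (h @ [obs]) i \<le> weight r h i"
  by (auto simp: weight_def refutations_snoc)

lemma weight_snoc_refuted: "refutes obs i \<Longrightarrow> weight r (h @ [obs]) i \<le> weight r h i / exp 1"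
  by (auto simp: weight_def refutations_snoc exp_diff[symmetric] algebra_simps)

lemma total_weight_snoc_le: "total_weight n r (h @ [obs]) \<le> total_weight n r h"
  unfolding total_weight_def by (intro sum_mono weight_snoc_le)

lemma one_le_total_weight:
  assumes "i < n" "refutations h i \<le> r"
  shows "1 \<le> total_weight n r h"
proof -
  have "weight r h i \<le> total_weight n r h"
    unfolding total_weight_def using assms(1) by (intro member_le_sum) (auto simp: weight_nonneg)
  with one_le_weight[OF assms(2)] show ?thesis by simp
qed

lemma lives_snoc_le: "lives n r (h @ [obs]) \<le> lives n r h"
  unfolding lives_def by (intro sum_mono) (auto simp: refutations_snoc)

lemma one_le_lives:
  assumes "i < n" "refutations h i \<le> r"
  shows "1 \<le> lives n r h"
proof -
  have "(if refutations h i \<le> r then r - refutations h i + 1 else 0) \<le> lives n r h"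
    unfolding lives_def using assms(1) by (intro member_le_sum) auto
  then show ?thesis using assms(2) by simp
qed

lemma lives_le_total_weight: "real (lives n r h) \<le> total_weight n r h"
  unfolding lives_def total_weight_def of_nat_sum
proof (rule sum_mono)
  fix i
  have "1 + (real r - real (refutations h i)) \<le> exp (real r - real (refutations h i))"
    by (rule exp_ge_add_one_self)
  then show "real (if refutations h i \<le> r then r - refutations h i + 1 else 0) \<le> weight r h i"
    by (simp add: weight_def of_nat_diff)
qed

lemma sum_vote_weight:
  assumes "x \<in> instances n k"
  shows "(\<Sum>l\<in>{1..k}. vote_weight n r h x l) = total_weight n r h"
proof -
  have "(\<Sum>l\<in>{1..k}. vote_weight n r h x l)
      = (\<Sum>i<n. \<Sum>l\<in>{1..k}. if x ! i = l then weight r h i else 0)"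
    unfolding vote_weight_def by (rule sum.swap)
  also have "\<dots> = total_weight n r h"
    unfolding total_weight_def using instances_nth[OF assms] by (intro sum.cong) auto
  finally show ?thesis .
qed

lemma total_weight_le_vote_weighted_majority:
  assumes "1 \<le> k" "x \<in> instances n k"
  shows "total_weight n r h \<le> real k * vote_weight n r h x (weighted_majority n k r h x)"
proof -
  have "\<forall>l\<in>{1..k}. vote_weight n r h x l \<le> vote_weight n r h x (weighted_majority n k r h x)"
    using arg_max_on_finite[of "{1..k}" "vote_weight n r h x"] assms(1)
    unfolding weighted_majority_def by simp
  then have "(\<Sum>l\<in>{1..k}. vote_weight n r h x l)
      \<le> real (card {1..k}) * vote_weight n r h x (weighted_majority n k r h x)"
    by (metis sum_bounded_above)
  then show ?thesis using sum_vote_weight[OF assms(2)] by simp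
qed

lemma total_weight_after_mistake:
  assumes "1 \<le> k" "x \<in> instances n k" "p = weighted_majority n k r h x"
  shows "total_weight n r (h @ [(x, p, False)]) \<le> total_weight n r h * mistake_decay k"
proof -
  let ?c = "1 - 1 / exp 1 :: real"
  have "total_weight n r (h @ [(x, p, False)])
      \<le> (\<Sum>i<n. weight r h i - ?c * (if x ! i = p then weight r h i else 0))"
    unfolding total_weight_def
  proof (rule sum_mono)
    fix i
    show "weight r (h @ [(x, p, False)]) i \<le> weight r h i - ?c * (if x ! i = p then weight r h i else 0)"
    proof (cases "x ! i = p")
      case True
      then have "weight r (h @ [(x, p, False)]) i \<le> weight r h i / exp 1"
        by (intro weight_snoc_refuted) simp
      then show ?thesis using True by (simp add: algebra_simps)
    qed (simp add: weight_def refutations_snoc)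
  qed
  also have "\<dots> = total_weight n r h - ?c * vote_weight n r h x p"
    by (simp add: total_weight_def vote_weight_def sum_subtractf sum_distrib_left)
  also have "\<dots> \<le> total_weight n r h - ?c * (total_weight n r h / real k)"
    using total_weight_le_vote_weighted_majority[OF assms(1,2), of r h] assms
    by (intro diff_left_mono mult_left_mono) (simp_all add: field_simps)
  also have "\<dots> = total_weight n r h * mistake_decay k"
    by (simp add: mistake_decay_def algebra_simps)
  finally show ?thesis .
qed

lemma lives_after_mistake:
  assumes "1 \<le> k" "x \<in> instances n k" "p = weighted_majority n k r h x"
    and "j < n" "refutations h j \<le> r"
  shows "lives n r (h @ [(x, p, False)]) < lives n r h"
proof -
  have "total_weight n r h \<le> real k * vote_weight n r h x p"
    using total_weight_le_vote_weighted_majority[OF assms(1,2)] assms(3) by simp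
  then have "vote_weight n r h x p \<noteq> 0"
    using one_le_total_weight[OF assms(4,5)] by auto
  then obtain i where "i \<in> {..<n}" "(if x ! i = p then weight r h i else 0) \<noteq> 0"
    unfolding vote_weight_def by (rule sum.not_neutral_contains_not_neutral)
  then have i: "i < n" "x ! i = p" "weight r h i \<noteq> 0" by (auto split: if_splits)
  then have "refutations h i \<le> r" by (auto simp: weight_def split: if_splits)
  show ?thesis unfolding lives_def
  proof (rule sum_strict_mono_ex1)
    show "\<forall>i'\<in>{..<n}. (if refutations (h @ [(x, p, False)]) i' \<le> r
        then r - refutations (h @ [(x, p, False)]) i' + 1 else 0)
      \<le> (if refutations h i' \<le> r then r - refutations h i' + 1 else 0)"
      by (auto simp: refutations_snoc)
    show "\<exists>i'\<in>{..<n}. (if refutations (h @ [(x, p, False)]) i' \<le> r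
        then r - refutations (h @ [(x, p, False)]) i' + 1 else 0)
      < (if refutations h i' \<le> r then r - refutations h i' + 1 else 0)"
      using i \<open>refutations h i \<le> r\<close> by (intro bexI[of _ i]) (auto simp: refutations_snoc)
  qed simp
qed

lemma potential_step:
  assumes "1 \<le> k" "x \<in> instances n k" "p = weighted_majority n k r h x"
    and "j < n" "refutations h j \<le> r"
  shows "(if p \<noteq> y then 1 else 0) + potential n k r (h @ [(x, p, p = y)]) \<le> potential n k r h"
proof (cases "p = y")
  case True
  have "mistake_potential k (total_weight n r (h @ [(x, p, True)])) (lives n r (h @ [(x, p, True)]))
      \<le> mistake_potential k (total_weight n r h) (lives n r h)"
    by (intro mistake_potential_mono assms(1) lives_le_total_weight total_weight_snoc_le lives_snoc_le)
  then show ?thesis using True by (simp add: potential_def)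
next
  case False
  have "mistake_potential k (total_weight n r (h @ [(x, p, False)])) (lives n r (h @ [(x, p, False)])) + 1
      \<le> mistake_potential k (total_weight n r h) (lives n r h)"
    by (rule mistake_potential_decrease[OF assms(1) lives_le_total_weight
        total_weight_after_mistake[OF assms(1-3)] lives_after_mistake[OF assms]])
  then show ?thesis using False by (simp add: potential_def)
qed

lemma weighted_majority_mistakes_le_potential:
  assumes "1 \<le> k" "j < n" "expert_errors j S \<le> r" "\<forall>(x, y)\<in>set S. x \<in> instances n k"
  shows "real (bandit_mistakes (weighted_majority n k r) S) \<le> potential n k r []"
  unfolding bandit_mistakes_def
proof (rule bandit_mistakes_from_le_potential[where Inv = "\<lambda>h S.
    (\<forall>(x, y)\<in>set S. x \<in> instances n k) \<and> refutations h j + expert_errors j S \<le> r"])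
  show "(\<forall>(x, y)\<in>set S. x \<in> instances n k) \<and> refutations [] j + expert_errors j S \<le> r"
    using assms(3,4) by simp
next
  fix h :: history
  assume "(\<forall>(x, y)\<in>set []. x \<in> instances n k) \<and> refutations h j + expert_errors j [] \<le> r"
  then have "1 \<le> lives n r h" using one_le_lives[OF assms(2)] by (simp add: expert_errors_def)
  then show "0 \<le> potential n k r h"
    unfolding potential_def by (rule mistake_potential_nonneg[OF assms(1)])
next
  fix h x y S
  assume inv: "(\<forall>(x', y')\<in>set ((x, y) # S). x' \<in> instances n k)
    \<and> refutations h j + expert_errors j ((x, y) # S) \<le> r"
  let ?p = "weighted_majority n k r h x"
  have "expert_errors j ((x, y) # S) = (if x ! j \<noteq> y then 1 else 0) + expert_errors j S"
    by (simp add: expert_errors_def)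
  then show "(\<forall>(x', y')\<in>set S. x' \<in> instances n k)
      \<and> refutations (h @ [(x, ?p, ?p = y)]) j + expert_errors j S \<le> r"
    using inv refutes_imp_expert_wrong[of x ?p y j] by (auto simp: refutations_snoc split: if_splits)
  show "(if ?p \<noteq> y then 1 else 0) + potential n k r (h @ [(x, ?p, ?p = y)]) \<le> potential n k r h"
    using inv by (intro potential_step[OF assms(1) _ refl assms(2)]) auto
qed

lemma potential_Nil:
  assumes "1 \<le> k" "k \<le> n"
  shows "potential n k r []
    = exp 1 / (exp 1 - 1) * real k * (ln (real n / real k) + real r) + real k - 1"
proof -
  have W: "total_weight n r [] = real n * exp (real r)"
    by (simp add: total_weight_def weight_def)
  have "real k \<le> real n * exp (real r)"
    using assms(2) mult_mono[of "real k" "real n" 1 "exp (real r)"] by simp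
  moreover have "ln (real n * exp (real r) / real k) = ln (real n / real k) + real r"
    using assms by (simp add: ln_div ln_mult_pos)
  ultimately show ?thesis
    unfolding potential_def mistake_potential_def log_potential_def W by simp
qed

theorem corollary4p3:
  fixes n k r :: nat
  assumes "2 \<le> k" and "k \<le> n"
  shows "opt_bandit_det n k r
           \<le> ereal (exp 1 / (exp 1 - 1) * real k * (ln (real n / real k) + real r) + real k - 1)"
proof -
  have "1 \<le> k" using assms(1) by simp
  have "opt_bandit_det n k r
      \<le> (SUP S \<in> P_r n k r. ereal (real (bandit_mistakes (weighted_majority n k r) S)))"
    unfolding opt_bandit_det_def by (rule INF_lower) simp
  also have "\<dots> \<le> ereal (potential n k r [])"
  proof (rule SUP_least)
    fix S assume "S \<in> P_r n k r"
    then obtain j where "j < n" "expert_errors j S \<le> r" "\<forall>(x, y)\<in>set S. x \<in> instances n k"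
      unfolding P_r_def by fastforce
    then show "ereal (real (bandit_mistakes (weighted_majority n k r) S)) \<le> ereal (potential n k r [])"
      using weighted_majority_mistakes_le_potential[OF \<open>1 \<le> k\<close>] by simp
  qed
  also have "\<dots> = ereal (exp 1 / (exp 1 - 1) * real k * (ln (real n / real k) + real r) + real k - 1)"
    using potential_Nil[OF \<open>1 \<le> k\<close> assms(2)] by simp
  finally show ?thesis .
qed

end
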